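(* Let $q=\{q_n\}_{n\geq1}$ be a system of Beurling primes with Beurling integers $\{\nu_n\}_{n\geq1}$, such that $\sigma_c(\zeta_q)<\infty$ and there are constants $c>0$, $C>0$ with $\nu_{n+1}-\nu_n\geq c\,\nu_{n+1}^{-C}$ for all $n\in\mathbb{N}$. Then for every $\varepsilon>0$ and for almost every $q'>1$, the set $q\cup\{q'\}$ is a system of Beurling primes whose Beurling integers $\{\nu'_n\}_{n\geq1}$ satisfy, for some constant $c'>0$ (depending on $q'$ and $q$), $$\nu'_{n+1}-\nu'_n\geq c'\,(\nu'_{n+1})^{-C'},\qquad n\in\mathbb{N},$$ where $C'=\max\bigl(C,\,2\sigma_c(\zeta_q)-1+\varepsilon\bigr)$.
   Context: A system of Beurling primes is an increasing sequence (finite or infinite) $q=\{q_n\}$ of real numbers with $q_n>1$ (and $q_n\to\infty$ if infinite) such that $\{\log q_n\}$ is linearly independent over $\mathbb{Q}$. The Beurling integers $\mathbb{N}_q=\{\nu_n\}_{n\geq1}$ are all finite products of elements of $q$ (including $\nu_1=1$), listed in increasing order. The Beurling zeta function is $\zeta_q(s)=\sum_{n\geq1}\nu_n^{-s}=\prod_{n}(1-q_n^{-s})^{-1}$, and $\sigma_c(\zeta_q)$ denotes the abscissa of convergence of this Dirichlet series. *)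

theory Defs
  imports "HOL-Analysis.Analysis"
begin

text \<open>A system of Beurling primes, represented by its (countable) set of elements:
  all elements exceed 1, the set is locally finite (so it can be listed as an
  increasing sequence, finite or tending to infinity), and the logarithms are
  linearly independent over the rationals.\<close>
definition beurling_primes :: "real set \<Rightarrow> bool" where
  "beurling_primes Q \<longleftrightarrow>
     (\<forall>p\<in>Q. p > 1) \<and>
     (\<forall>x::real. finite {p\<in>Q. p \<le> x}) \<and>
     (\<forall>F a. finite F \<and> F \<subseteq> Q \<and> (\<Sum>p\<in>F. real_of_rat (a p) * ln p) = 0
              \<longrightarrow> (\<forall>p\<in>F. a p = (0::rat)))"

definition beurling_integers :: "real set \<Rightarrow> real set" where
  "beurling_integers Q = {\<Prod>p\<in>F. p ^ e p | F e. finite F \<and> F \<subseteq> Q}"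

text \<open>Abscissa of convergence of the Beurling zeta function
  (the Dirichlet series has positive coefficients, so it is determined by real s).\<close>
definition beurling_abscissa :: "real set \<Rightarrow> ereal" where
  "beurling_abscissa Q =
     Inf {ereal \<sigma> | \<sigma>. (\<lambda>x. x powr (-\<sigma>)) summable_on beurling_integers Q}"

definition gap_condition :: "real set \<Rightarrow> real \<Rightarrow> real \<Rightarrow> bool" where
  "gap_condition N c C \<longleftrightarrow>
     (\<forall>x\<in>N. \<forall>y\<in>N. x < y \<and> (\<forall>z\<in>N. \<not> (x < z \<and> z < y)) \<longrightarrow> y - x \<ge> c * y powr (-C))"

end

theory Submission
  imports Defs
begin

text \<open>
  Every integer generated by \<open>Q \<union> {q}\<close> is \<open>\<nu> * q ^ k\<close> with \<open>\<nu>\<close> a Beurling integer of \<open>Q\<close>.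
  Two of them with the same power of \<open>q\<close> are separated by the gap condition for \<open>Q\<close>; two with
  different powers differ by at least \<open>\<bar>\<nu> * q ^ m - \<mu>\<bar>\<close> with \<open>m \<ge> 1\<close>. It therefore suffices that
  \<open>q\<close> be Diophantine: \<open>\<bar>\<nu> * q ^ m - \<mu>\<bar> \<ge> \<delta> * \<mu> powr -D\<close> for all \<open>\<nu>, \<mu>, m\<close> and some \<open>\<delta> > 0\<close>.

  For fixed \<open>\<nu>, \<mu>, m\<close> the \<open>q \<in> {a..b}\<close> violating this form an interval of length
  \<open>O(\<delta> * \<mu> powr (-D - 1))\<close>, empty unless \<open>\<nu> * a ^ m \<le> 2 * \<mu>\<close>; so only \<open>O(ln \<mu>)\<close> exponents
  contribute, and only when \<open>\<nu> \<le> 2 * \<mu>\<close>. For \<open>s\<close> beyond the abscissa and \<open>D > 2 * s - 1\<close> the total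
  length is \<open>O(\<delta> * \<zeta>(s)\<^sup>2)\<close>, hence almost every \<open>q\<close> is Diophantine for some \<open>\<delta>\<close>. Almost every
  \<open>q\<close> also avoids the countable sets \<open>Q\<close> and \<open>exp\<close> of the rational span of \<open>ln ` Q\<close>, which keeps
  \<open>Q \<union> {q}\<close> a system of Beurling primes.
\<close>

section \<open>Beurling integers\<close>

lemma beurling_integers_ge_1:
  assumes "\<forall>p\<in>Q. p > 1" and "x \<in> beurling_integers Q"
  shows "x \<ge> 1"
proof -
  from assms(2) obtain F e where x: "x = (\<Prod>p\<in>F. p ^ e p)" "F \<subseteq> Q"
    unfolding beurling_integers_def by blast
  show ?thesis unfolding x(1) using assms(1) x(2)
    by (intro prod_ge_1 one_le_power) (auto dest!: subsetD intro: less_imp_le)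
qed

lemma beurling_integers_insertE:
  assumes "x \<in> beurling_integers (insert q Q)"
  obtains \<nu> k where "\<nu> \<in> beurling_integers Q" "x = \<nu> * q ^ k"
proof -
  from assms obtain F e where x: "x = (\<Prod>p\<in>F. p ^ e p)" "finite F" "F \<subseteq> insert q Q"
    unfolding beurling_integers_def by blast
  have "(\<Prod>p\<in>F-{q}. p ^ e p) \<in> beurling_integers Q"
    unfolding beurling_integers_def using x by blast
  moreover have "x = (\<Prod>p\<in>F-{q}. p ^ e p) * q ^ (if q \<in> F then e q else 0)"
    using x by (cases "q \<in> F") (simp_all add: prod.remove mult.commute)
  ultimately show ?thesis using that by blast
qed

lemma summable_on_powr_if_beurling_abscissa_less:
  assumes "\<forall>p\<in>Q. p > 1" "beurling_abscissa Q < ereal s"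
  shows "(\<lambda>x. x powr (-s)) summable_on beurling_integers Q"
proof -
  obtain \<sigma> where "\<sigma> < s" and summable: "(\<lambda>x. x powr (-\<sigma>)) summable_on beurling_integers Q"
    using assms(2) unfolding beurling_abscissa_def Inf_less_iff by auto
  show ?thesis
  proof (rule summable_on_comparison_test[OF summable])
    fix x assume "x \<in> beurling_integers Q"
    then have "1 \<le> x" using beurling_integers_ge_1[OF assms(1)] by blast
    then show "x powr (-s) \<le> x powr (-\<sigma>)" using \<open>\<sigma> < s\<close> by (simp add: powr_mono)
  qed simp
qed

lemma finite_bounded_below_if_summable_on:
  fixes f :: "'a \<Rightarrow> real"
  assumes "f summable_on A" "\<And>x. x \<in> A \<Longrightarrow> f x \<ge> 0"
    and "B \<subseteq> A" "e > 0" "\<And>x. x \<in> B \<Longrightarrow> f x \<ge> e"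
  shows "finite B"
proof (rule ccontr)
  assume "infinite B"
  obtain n :: nat where n: "infsum f A < real n * e"
    using assms(4) ex_less_of_nat_mult by blast
  obtain F where F: "finite F" "card F = n" "F \<subseteq> B"
    using infinite_arbitrarily_large[OF \<open>infinite B\<close>] by blast
  have "real n * e = (\<Sum>x\<in>F. e)" using F by simp
  also have "\<dots> \<le> sum f F" using F assms(5) by (intro sum_mono) auto
  also have "\<dots> \<le> infsum f A" using F assms by (intro finite_sum_le_infsum) auto
  finally show False using n by simp
qed

lemma finite_atMost_if_summable_powr:
  fixes A :: "real set"
  assumes "(\<lambda>x. x powr (-s)) summable_on A" "s > 0" "\<And>x. x \<in> A \<Longrightarrow> x \<ge> 1"
  shows "finite {x\<in>A. x \<le> X}"
proof (cases "X \<ge> 1")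
  case True
  show ?thesis
  proof (rule finite_bounded_below_if_summable_on[OF assms(1), of _ "X powr (-s)"])
    fix x assume "x \<in> {x\<in>A. x \<le> X}"
    then show "X powr (-s) \<le> x powr (-s)" using assms(2) assms(3)[of x] by (intro powr_mono2') auto
  qed (use True in auto)
next
  case False
  then have "{x\<in>A. x \<le> X} = {}" using assms(3) by fastforce
  then show ?thesis by (simp only: finite.emptyI)
qed

lemma countable_if_finite_atMost:
  fixes A :: "real set"
  assumes "\<And>X. finite {x\<in>A. x \<le> X}"
  shows "countable A"
proof -
  have "A = (\<Union>n::nat. {x\<in>A. x \<le> real n})"
    by (auto intro: order_trans[OF _ real_nat_ceiling_ge])
  also have "countable \<dots>" using assms by (intro countable_UN) (auto intro: countable_finite)
  finally show ?thesis .
qed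

lemma gap_condition_all_pairs:
  fixes N :: "real set"
  assumes gap: "gap_condition N c C" and fin: "\<And>X. finite {z\<in>N. z \<le> X}"
    and "x \<in> N" "y \<in> N" "x \<noteq> y"
  shows "c * max x y powr (-C) \<le> \<bar>y - x\<bar>"
proof -
  have *: "c * v powr (-C) \<le> v - u" if "u \<in> N" "v \<in> N" "u < v" for u v
  proof -
    \<comment> \<open>By local finiteness \<open>N\<close> has a largest element below \<open>v\<close>; it is consecutive to \<open>v\<close>.\<close>
    define S where "S = {z\<in>N. u \<le> z \<and> z < v}"
    have "finite S" unfolding S_def by (rule finite_subset[OF _ fin[of v]]) auto
    moreover have "u \<in> S" unfolding S_def using that by auto
    ultimately have z: "Max S \<in> S" "u \<le> Max S" by (blast intro: Max_in, simp)
    have "\<forall>w\<in>N. \<not> (Max S < w \<and> w < v)"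
    proof (intro ballI notI)
      fix w assume "w \<in> N" "Max S < w \<and> w < v"
      then have "w \<in> S" using z unfolding S_def by auto
      then show False using Max_ge[OF \<open>finite S\<close>] \<open>Max S < w \<and> w < v\<close> by fastforce
    qed
    then have "c * v powr (-C) \<le> v - Max S"
      using gap z that unfolding gap_condition_def S_def by blast
    then show ?thesis using z by simp
  qed
  show ?thesis
    using *[of x y] *[of y x] assms by (cases "x < y") (auto simp: max_def)
qed

section \<open>Adjoining a prime with independent logarithm\<close>

definition rat_log_span :: "real set \<Rightarrow> real set" where
  "rat_log_span Q = {\<Sum>p\<in>F. real_of_rat (a p) * ln p | F a. finite F \<and> F \<subseteq> Q}"

lemma countable_rat_log_span:
  assumes "countable Q"
  shows "countable (rat_log_span Q)"
proof -
  define g where "g = (\<lambda>xs::(rat \<times> real) list. \<Sum>(r, p)\<leftarrow>xs. real_of_rat r * ln p)"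
  have "rat_log_span Q \<subseteq> g ` lists (UNIV \<times> Q)"
  proof
    fix t assume "t \<in> rat_log_span Q"
    then obtain F a where Fa: "finite F" "F \<subseteq> Q" "t = (\<Sum>p\<in>F. real_of_rat (a p) * ln p)"
      unfolding rat_log_span_def by blast
    define xs where "xs = map (\<lambda>p. (a p, p)) (sorted_list_of_set F)"
    have "xs \<in> lists (UNIV \<times> Q)" unfolding xs_def using Fa by auto
    moreover have "g xs = t"
      unfolding g_def xs_def Fa(3) using Fa(1)
      by (simp add: o_def sum_list_distinct_conv_sum_set sum.distinct_set_conv_list[symmetric])
    ultimately show "t \<in> g ` lists (UNIV \<times> Q)" by blast
  qed
  moreover have "countable (g ` lists (UNIV \<times> Q))" using assms by auto
  ultimately show ?thesis by (rule countable_subset)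
qed

lemma beurling_primes_insert:
  assumes bp: "beurling_primes Q" and q: "q > 1" "q \<notin> Q" "ln q \<notin> rat_log_span Q"
  shows "beurling_primes (insert q Q)"
  unfolding beurling_primes_def
proof (intro conjI allI impI)
  show "\<forall>p\<in>insert q Q. 1 < p" using bp q unfolding beurling_primes_def by auto
  fix x :: real
  have "{p \<in> insert q Q. p \<le> x} \<subseteq> insert q {p \<in> Q. p \<le> x}" by auto
  then show "finite {p \<in> insert q Q. p \<le> x}"
    using bp unfolding beurling_primes_def by (meson finite_insert finite_subset)
next
  fix F a assume Fa: "finite F \<and> F \<subseteq> insert q Q \<and> (\<Sum>p\<in>F. real_of_rat (a p) * ln p) = 0"
  have indep: "\<forall>p\<in>G. a p = 0"
    if "finite G" "G \<subseteq> Q" "(\<Sum>p\<in>G. real_of_rat (a p) * ln p) = 0" for G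
    using bp that unfolding beurling_primes_def by blast
  define R where "R = (\<Sum>p\<in>F-{q}. real_of_rat (a p) * ln p)"
  have R_in: "R * real_of_rat r \<in> rat_log_span Q" for r
  proof -
    have "R * real_of_rat r = (\<Sum>p\<in>F-{q}. real_of_rat (a p * r) * ln p)"
      unfolding R_def by (simp add: sum_distrib_left sum_distrib_right of_rat_mult mult_ac)
    moreover have "finite (F-{q})" "F-{q} \<subseteq> Q" using Fa by auto
    ultimately show ?thesis unfolding rat_log_span_def
      by (intro CollectI exI[of _ "F-{q}"] exI[of _ "\<lambda>p. a p * r"]) simp
  qed
  have "a q = 0" if "q \<in> F"
  proof (rule ccontr)
    assume "a q \<noteq> 0"
    have "real_of_rat (a q) * ln q + R = 0"
      using Fa that sum.remove[of F q "\<lambda>p. real_of_rat (a p) * ln p"] unfolding R_def by simp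
    then have "ln q = R * real_of_rat (- 1 / a q)"
      using \<open>a q \<noteq> 0\<close> by (simp add: of_rat_divide of_rat_minus field_simps)
    then show False using R_in q(3) by metis
  qed
  then have "R = 0"
    using Fa sum.remove[of F q "\<lambda>p. real_of_rat (a p) * ln p"] unfolding R_def
    by (cases "q \<in> F") simp_all
  then have "\<forall>p\<in>F-{q}. a p = 0" using Fa indep[of "F-{q}"] unfolding R_def by auto
  then show "\<forall>p\<in>F. a p = 0" using \<open>q \<in> F \<Longrightarrow> a q = 0\<close> by blast
qed

section \<open>Metric Diophantine approximation by powers\<close>

definition approx_set :: "real \<Rightarrow> real \<Rightarrow> real \<Rightarrow> real \<Rightarrow> real \<Rightarrow> nat \<Rightarrow> real set" where
  "approx_set a b \<eta> \<nu> \<mu> m = {q\<in>{a..b}. \<bar>\<nu> * q ^ m - \<mu>\<bar> < \<eta>}"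

lemma approx_set_sets [measurable]: "approx_set a b \<eta> \<nu> \<mu> m \<in> sets borel"
proof -
  have "open {q::real. \<bar>\<nu> * q ^ m - \<mu>\<bar> < \<eta>}"
    by (intro open_Collect_less continuous_intros)
  moreover have "approx_set a b \<eta> \<nu> \<mu> m = {a..b} \<inter> {q. \<bar>\<nu> * q ^ m - \<mu>\<bar> < \<eta>}"
    unfolding approx_set_def by auto
  ultimately show ?thesis by auto
qed

lemma power_diff_ge_mult:
  fixes x y :: real
  assumes "0 \<le> x" "x \<le> y" "m \<ge> 1"
  shows "x ^ (m - 1) * (y - x) \<le> y ^ m - x ^ m"
proof -
  obtain k where m: "m = Suc k" using assms(3) by (cases m) auto
  have "y * x ^ k \<le> y * y ^ k" using assms by (intro mult_left_mono power_mono) auto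
  then show ?thesis unfolding m by (simp add: algebra_simps)
qed

text \<open>On the set \<open>\<nu> * q ^ m > \<mu> / 2\<close>, so \<open>q \<mapsto> \<nu> * q ^ m\<close> grows with slope at least \<open>\<mu> / (2 * b)\<close>.\<close>

lemma approx_set_diameter:
  assumes "0 < a" "0 \<le> \<nu>" "\<eta> \<le> \<mu> / 2" "m \<ge> 1"
    and "x \<in> approx_set a b \<eta> \<nu> \<mu> m" "y \<in> approx_set a b \<eta> \<nu> \<mu> m" "x \<le> y"
  shows "y - x \<le> 4 * b * \<eta> / \<mu>"
proof -
  have x: "\<bar>\<nu> * x ^ m - \<mu>\<bar> < \<eta>" "a \<le> x" "x \<le> b"
    and y: "\<bar>\<nu> * y ^ m - \<mu>\<bar> < \<eta>" using assms(5,6) unfolding approx_set_def by auto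
  have "0 < \<mu>" using x(1) assms(3) by linarith
  have "0 < b" using x assms(1) by linarith
  have "x ^ m = x ^ (m - 1) * x" using assms(4) by (simp add: power_eq_if)
  then have "\<mu> / 2 < \<nu> * x ^ (m - 1) * x" using x(1) assms(3) by (simp add: abs_less_iff)
  also have "\<dots> \<le> \<nu> * x ^ (m - 1) * b" using x assms(1,2) by (intro mult_left_mono) auto
  finally have "\<mu> / (2 * b) \<le> \<nu> * x ^ (m - 1)" using \<open>0 < b\<close> by (simp add: field_simps)
  then have "\<mu> / (2 * b) * (y - x) \<le> \<nu> * x ^ (m - 1) * (y - x)"
    using assms(7) by (intro mult_right_mono) auto
  also have "\<dots> = \<nu> * (x ^ (m - 1) * (y - x))" by (simp only: mult.assoc)
  also have "\<dots> \<le> \<nu> * (y ^ m - x ^ m)"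
    using power_diff_ge_mult[of x y m] x assms by (intro mult_left_mono) auto
  also have "\<dots> < 2 * \<eta>" using x(1) y by (simp add: algebra_simps abs_less_iff)
  finally show ?thesis using \<open>0 < b\<close> \<open>0 < \<mu>\<close> by (simp add: field_simps)
qed

lemma emeasure_approx_set_le:
  assumes "0 < a" "0 \<le> \<nu>" "\<eta> \<le> \<mu> / 2" "m \<ge> 1"
  shows "emeasure lborel (approx_set a b \<eta> \<nu> \<mu> m)
           \<le> ennreal (if \<nu> * a ^ m \<le> 2 * \<mu> then 8 * b * \<eta> / \<mu> else 0)"
proof (cases "approx_set a b \<eta> \<nu> \<mu> m = {}")
  case False
  then obtain q0 where q0: "q0 \<in> approx_set a b \<eta> \<nu> \<mu> m" by blast
  then have "a \<le> q0" "\<bar>\<nu> * q0 ^ m - \<mu>\<bar> < \<eta>" unfolding approx_set_def by auto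
  moreover have "\<nu> * a ^ m \<le> \<nu> * q0 ^ m"
    using \<open>a \<le> q0\<close> assms by (intro mult_left_mono power_mono) auto
  ultimately have "\<nu> * a ^ m \<le> 2 * \<mu>" using assms(3) by (simp add: abs_less_iff)
  define L where "L = 4 * b * \<eta> / \<mu>"
  have "approx_set a b \<eta> \<nu> \<mu> m \<subseteq> {q0 - L .. q0 + L}"
    using approx_set_diameter[OF assms q0] approx_set_diameter[OF assms _ q0]
    unfolding L_def by (force simp: not_le dest: less_imp_le)
  then have "emeasure lborel (approx_set a b \<eta> \<nu> \<mu> m) \<le> emeasure lborel {q0 - L .. q0 + L}"
    by (intro emeasure_mono) auto
  also have "\<dots> = ennreal (8 * b * \<eta> / \<mu>)"
    using approx_set_diameter[OF assms q0 q0] by (simp add: L_def mult_ac)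
  finally show ?thesis using \<open>\<nu> * a ^ m \<le> 2 * \<mu>\<close> by simp
qed simp

lemma card_exponents_le:
  assumes "1 < a" "1 \<le> \<nu>" "1 \<le> \<mu>"
  shows "real (card {m\<in>{1..n}. \<nu> * a ^ m \<le> 2 * \<mu>}) \<le> ln (2 * \<mu>) / ln a"
proof -
  define X where "X = ln (2 * \<mu>) / ln a"
  have "{m\<in>{1..n}. \<nu> * a ^ m \<le> 2 * \<mu>} \<subseteq> {1..nat \<lfloor>X\<rfloor>}"
  proof
    fix m assume m: "m \<in> {m\<in>{1..n}. \<nu> * a ^ m \<le> 2 * \<mu>}"
    have "a ^ m \<le> \<nu> * a ^ m" using assms by simp
    then have "a ^ m \<le> 2 * \<mu>" using m by simp
    then have "ln (a ^ m) \<le> ln (2 * \<mu>)" using assms by (subst ln_le_cancel_iff) auto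
    then have "real m * ln a \<le> ln (2 * \<mu>)" using assms by (simp add: ln_realpow)
    then have "m \<le> nat \<lfloor>X\<rfloor>" unfolding X_def using assms by (simp add: field_simps le_nat_floor)
    then show "m \<in> {1..nat \<lfloor>X\<rfloor>}" using m by auto
  qed
  then have "card {m\<in>{1..n}. \<nu> * a ^ m \<le> 2 * \<mu>} \<le> nat \<lfloor>X\<rfloor>"
    by (metis card_atLeastAtMost card_mono diff_Suc_1 finite_atLeastAtMost)
  moreover have "X \<ge> 0" unfolding X_def using assms by auto
  ultimately show ?thesis unfolding X_def[symmetric] by linarith
qed

lemma ln_double_le_powr:
  fixes x \<tau> :: real
  assumes "x \<ge> 1" "\<tau> > 0"
  shows "ln (2 * x) \<le> (1 + 1/\<tau>) * x powr \<tau>"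
proof -
  have "ln (x powr \<tau>) \<le> x powr \<tau> - 1" using assms by (intro ln_le_minus_one) simp
  then have "ln x \<le> x powr \<tau> / \<tau>" using assms by (simp add: ln_powr field_simps)
  moreover have "ln 2 \<le> x powr \<tau>"
    using ln_2_less_1 assms ge_one_powr_ge_zero[of x \<tau>] by linarith
  ultimately show ?thesis using assms by (simp add: ln_mult algebra_simps)
qed

text \<open>The factor \<open>ln (2 * \<mu>)\<close> bounds the number of exponents \<open>m\<close> with \<open>\<nu> * a ^ m \<le> 2 * \<mu>\<close>; the slack
  \<open>\<tau>\<close> in the exponent absorbs it.\<close>

lemma ln_powr_weight_le:
  fixes \<nu> \<mu> s \<tau> D :: real
  assumes "0 < \<nu>" "\<nu> \<le> 2 * \<mu>" "1 \<le> \<mu>" "0 \<le> s" "0 < \<tau>" "2 * s - 1 + 2 * \<tau> \<le> D"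
  shows "ln (2 * \<mu>) * \<mu> powr (-D - 1) \<le> (1 + 1/\<tau>) * 2 powr s * (\<nu> powr (-s) * \<mu> powr (-s))"
proof -
  have "\<mu> powr (-s) \<le> 2 powr s * \<nu> powr (-s)"
  proof -
    have "\<nu> powr s \<le> 2 powr s * \<mu> powr s"
      using assms powr_mono2[of s \<nu> "2 * \<mu>"] by (simp add: powr_mult)
    then show ?thesis using assms by (simp add: powr_minus field_simps)
  qed
  have "ln (2 * \<mu>) * \<mu> powr (-D - 1) \<le> (1 + 1/\<tau>) * \<mu> powr \<tau> * \<mu> powr (-D - 1)"
    using ln_double_le_powr[of \<mu> \<tau>] assms by (intro mult_right_mono) auto
  also have "\<dots> = (1 + 1/\<tau>) * \<mu> powr (\<tau> + (-D - 1))" by (simp add: powr_add)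
  also have "\<dots> \<le> (1 + 1/\<tau>) * \<mu> powr (-s - s)"
    using assms by (intro mult_left_mono powr_mono) auto
  also have "\<dots> = (1 + 1/\<tau>) * (\<mu> powr (-s) * \<mu> powr (-s))" by (simp add: powr_add[symmetric])
  also have "\<dots> \<le> (1 + 1/\<tau>) * ((2 powr s * \<nu> powr (-s)) * \<mu> powr (-s))"
    using \<open>\<mu> powr (-s) \<le> 2 powr s * \<nu> powr (-s)\<close> assms
    by (intro mult_left_mono mult_right_mono) auto
  finally show ?thesis by (simp add: mult_ac)
qed

lemma sum_emeasure_approx_sets_le:
  fixes a b \<nu> \<mu> \<delta> s \<tau> D :: real
  assumes "1 < a" "a \<le> b" "1 \<le> \<nu>" "1 \<le> \<mu>" "0 < \<delta>" "\<delta> \<le> 1/2"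
    and "0 \<le> D" "0 \<le> s" "0 < \<tau>" "2 * s - 1 + 2 * \<tau> \<le> D"
  shows "(\<Sum>m\<in>{1..n}. emeasure lborel (approx_set a b (\<delta> * \<mu> powr -D) \<nu> \<mu> m))
           \<le> ennreal (8 * b * (1 + 1/\<tau>) * 2 powr s / ln a * \<delta> * (\<nu> powr (-s) * \<mu> powr (-s)))"
proof -
  define T where "T = 8 * b * (\<delta> * \<mu> powr -D) / \<mu>"
  define M where "M = {m\<in>{1..n}. \<nu> * a ^ m \<le> 2 * \<mu>}"
  have "T \<ge> 0" unfolding T_def using assms by auto
  have "\<mu> powr -D \<le> 1" using assms by (simp add: powr_minus_divide ge_one_powr_ge_zero)
  then have "\<delta> * \<mu> powr -D \<le> 1/2 * 1" using assms by (intro mult_mono) auto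
  then have "\<delta> * \<mu> powr -D \<le> \<mu> / 2" using assms by linarith
  then have "(\<Sum>m\<in>{1..n}. emeasure lborel (approx_set a b (\<delta> * \<mu> powr -D) \<nu> \<mu> m))
      \<le> (\<Sum>m\<in>{1..n}. ennreal (if \<nu> * a ^ m \<le> 2 * \<mu> then T else 0))"
    unfolding T_def using assms by (intro sum_mono emeasure_approx_set_le) auto
  also have "\<dots> = ennreal (\<Sum>m\<in>{1..n}. if \<nu> * a ^ m \<le> 2 * \<mu> then T else 0)"
    using \<open>T \<ge> 0\<close> by (intro sum_ennreal) auto
  also have "(\<Sum>m\<in>{1..n}. if \<nu> * a ^ m \<le> 2 * \<mu> then T else 0) = real (card M) * T"
    unfolding M_def by (simp add: sum.If_cases Int_def)
  also have "real (card M) * T \<le> 8 * b * (1 + 1/\<tau>) * 2 powr s / ln a * \<delta> * (\<nu> powr (-s) * \<mu> powr (-s))"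
  proof (cases "M = {}")
    case False
    then obtain m where "\<nu> * a ^ m \<le> 2 * \<mu>" unfolding M_def by auto
    moreover have "\<nu> \<le> \<nu> * a ^ m" using assms by simp
    ultimately have "\<nu> \<le> 2 * \<mu>" by linarith
    have "real (card M) * T \<le> ln (2 * \<mu>) / ln a * T"
      unfolding M_def using card_exponents_le[of a \<nu> \<mu> n] \<open>T \<ge> 0\<close> assms
      by (intro mult_right_mono) auto
    also have "\<dots> = 8 * b * \<delta> / ln a * (ln (2 * \<mu>) * \<mu> powr (-D - 1))"
      unfolding T_def using assms by (simp add: powr_diff powr_minus field_simps)
    also have "\<dots> \<le> 8 * b * \<delta> / ln a * ((1 + 1/\<tau>) * 2 powr s * (\<nu> powr (-s) * \<mu> powr (-s)))"
      using ln_powr_weight_le[of \<nu> \<mu> s \<tau> D] \<open>\<nu> \<le> 2 * \<mu>\<close> assms by (intro mult_left_mono) auto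
    also have "\<dots> = 8 * b * (1 + 1/\<tau>) * 2 powr s / ln a * \<delta> * (\<nu> powr (-s) * \<mu> powr (-s))"
      by (simp add: divide_inverse mult_ac)
    finally show ?thesis .
  qed (use assms in auto)
  finally show ?thesis by (simp add: ennreal_leI)
qed

lemma emeasure_UN_countable_le:
  assumes "countable I" "\<And>i. i \<in> I \<Longrightarrow> A i \<in> sets M"
    and "\<And>F. finite F \<Longrightarrow> F \<subseteq> I \<Longrightarrow> emeasure M (\<Union>i\<in>F. A i) \<le> B"
  shows "emeasure M (\<Union>i\<in>I. A i) \<le> B"
proof (cases "I = {}")
  case False
  define F where "F n = from_nat_into I ` {..n}" for n
  have F: "finite (F n)" "F n \<subseteq> I" for n
    unfolding F_def using from_nat_into[OF False] by auto
  have "(\<Union>i\<in>I. A i) = (\<Union>n. \<Union>i\<in>F n. A i)"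
  proof
    show "(\<Union>i\<in>I. A i) \<subseteq> (\<Union>n. \<Union>i\<in>F n. A i)"
      using from_nat_into_surj[OF assms(1)] unfolding F_def by fastforce
  qed (use F(2) in blast)
  also have "emeasure M \<dots> = (SUP n. emeasure M (\<Union>i\<in>F n. A i))"
  proof (rule SUP_emeasure_incseq[symmetric])
    show "range (\<lambda>n. \<Union>i\<in>F n. A i) \<subseteq> sets M"
      using F assms(2) by (auto intro!: sets.finite_UN)
    show "incseq (\<lambda>n. \<Union>i\<in>F n. A i)"
      unfolding F_def by (intro monoI UN_mono image_mono) auto
  qed
  also have "\<dots> \<le> B" using F assms(3) by (intro SUP_least) auto
  finally show ?thesis .
qed simp

definition exceptional_set :: "real set \<Rightarrow> real \<Rightarrow> real \<Rightarrow> real \<Rightarrow> real \<Rightarrow> real set" where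
  "exceptional_set N D a b \<delta> = (\<Union>(\<nu>, \<mu>, m)\<in>N \<times> N \<times> {1..}. approx_set a b (\<delta> * \<mu> powr -D) \<nu> \<mu> m)"

definition diophantine :: "real set \<Rightarrow> real \<Rightarrow> real \<Rightarrow> real \<Rightarrow> bool" where
  "diophantine N D \<delta> q \<longleftrightarrow> (\<forall>\<nu>\<in>N. \<forall>\<mu>\<in>N. \<forall>m\<ge>1. \<delta> * \<mu> powr (-D) \<le> \<bar>\<nu> * q ^ m - \<mu>\<bar>)"

context
  fixes N :: "real set" and s \<tau> D a b :: real
  assumes N_ge_1: "\<And>x. x \<in> N \<Longrightarrow> 1 \<le> x"
    and summable: "(\<lambda>x. x powr (-s)) summable_on N"
    and s: "0 < s" and \<tau>: "0 < \<tau>" and D: "2 * s - 1 + 2 * \<tau> \<le> D" "0 \<le> D"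
    and ab: "1 < a" "a \<le> b"
begin

lemma emeasure_approx_sets_le:
  assumes "finite F" "F \<subseteq> N \<times> N \<times> {1..}" "0 < \<delta>" "\<delta> \<le> 1/2"
  shows "emeasure lborel (\<Union>(\<nu>, \<mu>, m)\<in>F. approx_set a b (\<delta> * \<mu> powr -D) \<nu> \<mu> m)
           \<le> ennreal (8 * b * (1 + 1/\<tau>) * 2 powr s / ln a * \<delta> * (infsum (\<lambda>x. x powr (-s)) N)\<^sup>2)"
proof -
  define K where "K = 8 * b * (1 + 1/\<tau>) * 2 powr s / ln a"
  define S where "S = infsum (\<lambda>x. x powr (-s)) N"
  define A where "A = (\<lambda>(\<nu>, \<mu>, m). approx_set a b (\<delta> * \<mu> powr -D) \<nu> \<mu> m)"
  define G where "G = fst ` F \<union> fst ` snd ` F"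
  define n where "n = Max (insert 0 (snd ` snd ` F))"
  have "0 \<le> K" unfolding K_def using ab \<tau> by auto
  have G: "finite G" "G \<subseteq> N" unfolding G_def using assms by auto
  have "F \<subseteq> G \<times> G \<times> {1..n}"
    unfolding G_def n_def using assms(1,2) by (force intro: Max_ge)
  then have "emeasure lborel (\<Union>(A ` F)) \<le> emeasure lborel (\<Union>(A ` (G \<times> G \<times> {1..n})))"
    using G by (intro emeasure_mono sets.finite_UN) (auto simp: A_def)
  also have "\<dots> \<le> (\<Sum>t\<in>G \<times> G \<times> {1..n}. emeasure lborel (A t))"
    using G by (intro emeasure_subadditive_finite) (auto simp: A_def approx_set_sets)
  also have "\<dots> = (\<Sum>\<nu>\<in>G. \<Sum>\<mu>\<in>G. \<Sum>m\<in>{1..n}. emeasure lborel (approx_set a b (\<delta> * \<mu> powr -D) \<nu> \<mu> m))"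
    by (simp add: A_def sum.cartesian_product split_def)
  also have "\<dots> \<le> (\<Sum>\<nu>\<in>G. \<Sum>\<mu>\<in>G. ennreal (K * \<delta> * (\<nu> powr (-s) * \<mu> powr (-s))))"
    unfolding K_def using G N_ge_1 s \<tau> D ab assms
    by (intro sum_mono sum_emeasure_approx_sets_le) auto
  also have "\<dots> = ennreal (\<Sum>\<nu>\<in>G. \<Sum>\<mu>\<in>G. K * \<delta> * (\<nu> powr (-s) * \<mu> powr (-s)))"
    using \<open>0 \<le> K\<close> assms by (simp add: sum_ennreal sum_nonneg)
  also have "\<dots> = ennreal (K * \<delta> * ((\<Sum>\<nu>\<in>G. \<nu> powr (-s)) * (\<Sum>\<mu>\<in>G. \<mu> powr (-s))))"
    by (subst sum_product) (simp add: sum_distrib_left)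
  also have "\<dots> \<le> ennreal (K * \<delta> * S\<^sup>2)"
  proof (intro ennreal_leI mult_left_mono)
    have "0 \<le> (\<Sum>x\<in>G. x powr (-s))" by (intro sum_nonneg) auto
    moreover have "(\<Sum>x\<in>G. x powr (-s)) \<le> S"
      unfolding S_def using G summable by (intro finite_sum_le_infsum) auto
    ultimately show "(\<Sum>\<nu>\<in>G. \<nu> powr (-s)) * (\<Sum>\<mu>\<in>G. \<mu> powr (-s)) \<le> S\<^sup>2"
      unfolding power2_eq_square by (intro mult_mono) auto
  qed (use \<open>0 \<le> K\<close> assms in auto)
  finally show ?thesis by (simp add: A_def K_def S_def)
qed

lemma countable_N: "countable N"
  using finite_atMost_if_summable_powr[OF summable s N_ge_1] by (rule countable_if_finite_atMost)

lemma exceptional_set_sets: "exceptional_set N D a b \<delta> \<in> sets borel"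
  unfolding exceptional_set_def using countable_N
  by (intro sets.countable_UN'') (auto simp: approx_set_sets)

lemma emeasure_exceptional_set_le:
  assumes "0 < \<delta>" "\<delta> \<le> 1/2"
  shows "emeasure lborel (exceptional_set N D a b \<delta>)
           \<le> ennreal (8 * b * (1 + 1/\<tau>) * 2 powr s / ln a * \<delta> * (infsum (\<lambda>x. x powr (-s)) N)\<^sup>2)"
  unfolding exceptional_set_def
proof (rule emeasure_UN_countable_le)
  show "countable (N \<times> N \<times> {1::nat..})" using countable_N by auto
qed (use assms emeasure_approx_sets_le in auto)

text \<open>The levels \<open>1 / (k + 2)\<close> stay below the threshold \<open>1 / 2\<close> of the measure estimate.\<close>

lemma null_sets_exceptional: "(\<Inter>k::nat. exceptional_set N D a b (1 / (real k + 2))) \<in> null_sets lborel"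
proof -
  define Z where "Z = (\<Inter>k::nat. exceptional_set N D a b (1 / (real k + 2)))"
  define K where "K = 8 * b * (1 + 1/\<tau>) * 2 powr s / ln a * (infsum (\<lambda>x. x powr (-s)) N)\<^sup>2"
  have Z_le: "emeasure lborel Z \<le> ennreal (K / (real k + 2))" for k :: nat
  proof -
    have "emeasure lborel Z \<le> emeasure lborel (exceptional_set N D a b (1 / (real k + 2)))"
      unfolding Z_def by (rule emeasure_mono) (blast, simp add: exceptional_set_sets)
    also have "\<dots> \<le> ennreal (K / (real k + 2))"
      using emeasure_exceptional_set_le[of "1 / (real k + 2)"] by (simp add: K_def)
    finally show ?thesis .
  qed
  have "emeasure lborel Z \<le> 0"
  proof (rule ennreal_le_epsilon)
    fix e :: real assume "0 < e"
    then obtain k :: nat where "K / e < k" using reals_Archimedean2 by blast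
    then have "K / (real k + 2) \<le> e" using \<open>0 < e\<close> by (simp add: field_simps)
    then have "ennreal (K / (real k + 2)) \<le> ennreal e" by (rule ennreal_leI)
    then show "emeasure lborel Z \<le> 0 + ennreal e" using Z_le[of k] by simp
  qed
  moreover have "Z \<in> sets lborel"
    unfolding Z_def using exceptional_set_sets by (intro sets.countable_INT) auto
  ultimately show ?thesis unfolding Z_def by (intro null_setsI) auto
qed

lemma AE_diophantine_on_interval: "AE q in lborel. q \<in> {a..b} \<longrightarrow> (\<exists>\<delta>>0. diophantine N D \<delta> q)"
proof (rule AE_I'[OF null_sets_exceptional])
  show "{q \<in> space lborel. \<not> (q \<in> {a..b} \<longrightarrow> (\<exists>\<delta>>0. diophantine N D \<delta> q))}
          \<subseteq> (\<Inter>k::nat. exceptional_set N D a b (1 / (real k + 2)))"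
  proof (intro subsetI INT_I)
    fix q and k :: nat
    assume "q \<in> {q \<in> space lborel. \<not> (q \<in> {a..b} \<longrightarrow> (\<exists>\<delta>>0. diophantine N D \<delta> q))}"
    then have "q \<in> {a..b}" "\<not> diophantine N D (1 / (real k + 2)) q" by auto
    then show "q \<in> exceptional_set N D a b (1 / (real k + 2))"
      unfolding exceptional_set_def diophantine_def approx_set_def by force
  qed
qed

end

lemma AE_diophantine:
  fixes N :: "real set" and s \<tau> D :: real
  assumes "\<And>x. x \<in> N \<Longrightarrow> 1 \<le> x" "(\<lambda>x. x powr (-s)) summable_on N"
    and "0 < s" "0 < \<tau>" "2 * s - 1 + 2 * \<tau> \<le> D" "0 \<le> D"
  shows "AE q in lborel. 1 < q \<longrightarrow> (\<exists>\<delta>>0. diophantine N D \<delta> q)"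
proof -
  have "1 / (real j + 1) \<le> 1" for j :: nat by simp
  then have "1 + 1 / (real j + 1) \<le> real j + 2" for j :: nat
    by (smt (verit) of_nat_0_le_iff)
  then have "AE q in lborel. \<forall>j::nat. q \<in> {1 + 1 / (real j + 1) .. real j + 2} \<longrightarrow> (\<exists>\<delta>>0. diophantine N D \<delta> q)"
    using assms by (intro AE_all_countable[THEN iffD2] allI AE_diophantine_on_interval) auto
  then show ?thesis
  proof eventually_elim
    case (elim q)
    show ?case
    proof
      assume "1 < q"
      define j where "j = nat \<lceil>max (1 / (q - 1)) q\<rceil>"
      have "1 / (q - 1) \<le> j" "q \<le> j" unfolding j_def by linarith+
      then have "q \<in> {1 + 1 / (real j + 1) .. real j + 2}" using \<open>1 < q\<close> by (auto simp: field_simps)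
      then show "\<exists>\<delta>>0. diophantine N D \<delta> q" using elim by blast
    qed
  qed
qed

section \<open>Gaps after adjoining a Diophantine prime\<close>

lemma diophantine_separation:
  assumes "diophantine N D \<delta> q" "\<nu> \<in> N" "\<mu> \<in> N" "1 \<le> q" "l < k"
  shows "\<delta> * \<mu> powr (-D) \<le> \<bar>\<nu> * q ^ k - \<mu> * q ^ l\<bar>"
proof -
  have "q ^ k = q ^ l * q ^ (k - l)" using assms(5) by (simp flip: power_add)
  then have "\<nu> * q ^ k - \<mu> * q ^ l = q ^ l * (\<nu> * q ^ (k - l) - \<mu>)" by (simp add: algebra_simps)
  then have "\<bar>\<nu> * q ^ k - \<mu> * q ^ l\<bar> = q ^ l * \<bar>\<nu> * q ^ (k - l) - \<mu>\<bar>"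
    using assms(4) by (simp add: abs_mult)
  moreover have "\<bar>\<nu> * q ^ (k - l) - \<mu>\<bar> \<le> q ^ l * \<bar>\<nu> * q ^ (k - l) - \<mu>\<bar>"
    using assms(4) by (simp add: mult_le_cancel_right1)
  moreover have "\<delta> * \<mu> powr (-D) \<le> \<bar>\<nu> * q ^ (k - l) - \<mu>\<bar>"
    using assms unfolding diophantine_def by auto
  ultimately show ?thesis by linarith
qed

lemma gap_condition_insert:
  fixes Q :: "real set" and q c C D \<delta> :: real
  assumes Q1: "\<forall>p\<in>Q. p > 1"
    and fin: "\<And>X. finite {z\<in>beurling_integers Q. z \<le> X}"
    and gap: "gap_condition (beurling_integers Q) c C"
    and "0 \<le> c" "C \<le> D" "0 \<le> D" "0 \<le> \<delta>"
    and q: "1 < q" and dioph: "diophantine (beurling_integers Q) D \<delta> q"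
  shows "gap_condition (beurling_integers (insert q Q)) (min c \<delta>) D"
  unfolding gap_condition_def
proof (intro ballI impI)
  fix x y
  assume "x \<in> beurling_integers (insert q Q)" "y \<in> beurling_integers (insert q Q)"
    and "x < y \<and> (\<forall>z\<in>beurling_integers (insert q Q). \<not> (x < z \<and> z < y))"
  then have "x < y" by simp
  obtain \<nu> k where \<nu>: "\<nu> \<in> beurling_integers Q" "x = \<nu> * q ^ k"
    using beurling_integers_insertE[OF \<open>x \<in> _\<close>] .
  obtain \<mu> l where \<mu>: "\<mu> \<in> beurling_integers Q" "y = \<mu> * q ^ l"
    using beurling_integers_insertE[OF \<open>y \<in> _\<close>] .
  define M where "M = max \<nu> \<mu>"
  have "1 \<le> \<nu>" "1 \<le> \<mu>" using \<nu> \<mu> beurling_integers_ge_1[OF Q1] by auto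
  then have "\<nu> \<le> x" "\<mu> \<le> y" using \<nu> \<mu> q by (simp_all add: mult_le_cancel_left1)
  then have M: "1 \<le> M" "M \<le> y" using \<open>1 \<le> \<nu>\<close> \<open>x < y\<close> unfolding M_def by auto
  have "min c \<delta> * M powr (-D) \<le> \<bar>y - x\<bar>"
  proof (cases "k = l")
    case True
    then have "\<nu> \<noteq> \<mu>" using \<nu> \<mu> \<open>x < y\<close> by auto
    have "min c \<delta> * M powr (-D) \<le> c * M powr (-C)"
      using M \<open>0 \<le> c\<close> \<open>C \<le> D\<close> by (intro mult_mono powr_mono) auto
    also have "\<dots> \<le> \<bar>\<mu> - \<nu>\<bar>"
      unfolding M_def using gap_condition_all_pairs[OF gap fin \<nu>(1) \<mu>(1) \<open>\<nu> \<noteq> \<mu>\<close>] .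
    also have "\<dots> \<le> q ^ k * \<bar>\<mu> - \<nu>\<bar>" using q by (simp add: mult_le_cancel_right1)
    also have "\<dots> = \<bar>y - x\<bar>"
    proof -
      have "y - x = q ^ k * (\<mu> - \<nu>)" using \<nu> \<mu> True by (simp add: algebra_simps)
      then show ?thesis using q by (simp add: abs_mult)
    qed
    finally show ?thesis .
  next
    case False
    have "\<delta> * M powr (-D) \<le> \<bar>y - x\<bar>"
    proof (cases "l < k")
      case True
      have "\<delta> * M powr (-D) \<le> \<delta> * \<mu> powr (-D)"
        using \<open>1 \<le> \<mu>\<close> \<open>0 \<le> D\<close> \<open>0 \<le> \<delta>\<close> unfolding M_def by (intro mult_left_mono powr_mono2') auto
      also have "\<dots> \<le> \<bar>x - y\<bar>"
        using diophantine_separation[OF dioph \<nu>(1) \<mu>(1) _ True] q \<nu> \<mu> by simp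
      finally show ?thesis by simp
    next
      case False
      then have "k < l" using \<open>k \<noteq> l\<close> by simp
      have "\<delta> * M powr (-D) \<le> \<delta> * \<nu> powr (-D)"
        using \<open>1 \<le> \<nu>\<close> \<open>0 \<le> D\<close> \<open>0 \<le> \<delta>\<close> unfolding M_def by (intro mult_left_mono powr_mono2') auto
      also have "\<dots> \<le> \<bar>y - x\<bar>"
        using diophantine_separation[OF dioph \<mu>(1) \<nu>(1) _ \<open>k < l\<close>] q \<nu> \<mu> by simp
      finally show ?thesis .
    qed
    then show ?thesis
      using \<open>0 \<le> \<delta>\<close> by (smt (verit) min.cobounded2 mult_right_mono powr_ge_zero)
  qed
  moreover have "y powr (-D) \<le> M powr (-D)" using M \<open>0 \<le> D\<close> by (intro powr_mono2') auto
  ultimately show "min c \<delta> * y powr (-D) \<le> y - x"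
    using \<open>x < y\<close> \<open>0 \<le> c\<close> \<open>0 \<le> \<delta>\<close> by (smt (verit) mult_left_mono min.boundedI)
qed

lemma AE_beurling_primes_insert_gap:
  fixes Q :: "real set" and c C s \<tau> D :: real
  assumes bp: "beurling_primes Q" and gap: "gap_condition (beurling_integers Q) c C"
    and "0 < c" "C \<le> D" "0 \<le> D"
    and summable: "(\<lambda>x. x powr (-s)) summable_on beurling_integers Q"
    and "0 < s" "0 < \<tau>" "2 * s - 1 + 2 * \<tau> \<le> D"
  shows "AE q in lborel. 1 < q \<longrightarrow> q \<notin> Q \<and> beurling_primes (insert q Q) \<and>
           (\<exists>c'>0. gap_condition (beurling_integers (insert q Q)) c' D)"
proof -
  have Q1: "\<forall>p\<in>Q. p > 1" using bp unfolding beurling_primes_def by blast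
  have N_ge_1: "\<And>x. x \<in> beurling_integers Q \<Longrightarrow> 1 \<le> x"
    using beurling_integers_ge_1[OF Q1] by blast
  have fin: "\<And>X. finite {z\<in>beurling_integers Q. z \<le> X}"
    using finite_atMost_if_summable_powr[OF summable \<open>0 < s\<close> N_ge_1] .
  have "countable Q"
    using bp unfolding beurling_primes_def by (intro countable_if_finite_atMost) blast
  have "AE q in lborel. q \<notin> Q"
    using countable_imp_null_set_lborel[OF \<open>countable Q\<close>] by (rule AE_not_in)
  moreover have "AE q in lborel. q \<notin> exp ` rat_log_span Q"
    using countable_imp_null_set_lborel[OF countable_image[OF countable_rat_log_span[OF \<open>countable Q\<close>]]]
    by (rule AE_not_in)
  moreover have "AE q in lborel. 1 < q \<longrightarrow> (\<exists>\<delta>>0. diophantine (beurling_integers Q) D \<delta> q)"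
    using AE_diophantine[OF N_ge_1 summable] assms by blast
  ultimately show ?thesis
  proof eventually_elim
    case (elim q)
    show ?case
    proof
      assume "1 < q"
      then obtain \<delta> where "0 < \<delta>" "diophantine (beurling_integers Q) D \<delta> q" using elim by blast
      have "ln q \<notin> rat_log_span Q" using elim \<open>1 < q\<close> by force
      then have "beurling_primes (insert q Q)"
        using beurling_primes_insert[OF bp \<open>1 < q\<close>] elim by blast
      moreover have "gap_condition (beurling_integers (insert q Q)) (min c \<delta>) D"
        using gap_condition_insert[OF Q1 fin gap] \<open>1 < q\<close> \<open>0 < \<delta>\<close> assms
          \<open>diophantine (beurling_integers Q) D \<delta> q\<close> by simp
      ultimately show "q \<notin> Q \<and> beurling_primes (insert q Q) \<and>
          (\<exists>c'>0. gap_condition (beurling_integers (insert q Q)) c' D)"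
        using elim \<open>0 < c\<close> \<open>0 < \<delta>\<close> by (metis min_less_iff_conj)
    qed
  qed
qed

lemma ereal_less_of_twice_le:
  fixes \<sigma> :: ereal and D \<epsilon> :: real
  assumes "\<sigma> < \<infinity>" "2 * \<sigma> - 1 + ereal \<epsilon> \<le> ereal D" "0 < \<epsilon>"
  shows "\<sigma> < ereal ((D + 1 - \<epsilon> / 2) / 2)"
  using assms by (cases \<sigma>) (auto simp: one_ereal_def)

theorem lemma2p1:
  fixes Q :: "real set" and c C \<epsilon> :: real
  assumes "beurling_primes Q"
    and "beurling_abscissa Q < \<infinity>"
    and "c > 0" and "C > 0"
    and "gap_condition (beurling_integers Q) c C"
    and "\<epsilon> > 0"
  shows "AE q' in lborel. q' > 1 \<longrightarrow>
           q' \<notin> Q \<and> beurling_primes (insert q' Q) \<and>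
           (\<exists>c'>0. gap_condition (beurling_integers (insert q' Q)) c'
              (real_of_ereal (max (ereal C) (2 * beurling_abscissa Q - 1 + ereal \<epsilon>))))"
proof -
  define D where "D = real_of_ereal (max (ereal C) (2 * beurling_abscissa Q - 1 + ereal \<epsilon>))"
  have "ereal D = max (ereal C) (2 * beurling_abscissa Q - 1 + ereal \<epsilon>)"
    unfolding D_def using assms(2) by (cases "beurling_abscissa Q") (auto simp: one_ereal_def max_def)
  then have "C \<le> D" "2 * beurling_abscissa Q - 1 + ereal \<epsilon> \<le> ereal D"
    by (metis ereal_less_eq(3) max.cobounded1, metis max.cobounded2)
  define \<tau> where "\<tau> = min (\<epsilon> / 4) (1 / 4)"
  \<comment> \<open>\<open>s\<close> lies above the abscissa; the floor \<open>1 / 4\<close> keeps it positive when the abscissa is small or \<open>-\<infinity>\<close>.\<close>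
  define s where "s = max (1 / 4) ((D + 1 - \<epsilon> / 2) / 2)"
  have "beurling_abscissa Q < ereal s"
    using ereal_less_of_twice_le[OF assms(2) _ assms(6)] \<open>2 * beurling_abscissa Q - 1 + _ \<le> _\<close>
    unfolding s_def by (meson ereal_less_eq(3) max.cobounded2 order_less_le_trans)
  moreover have "\<forall>p\<in>Q. p > 1" using assms(1) unfolding beurling_primes_def by blast
  ultimately have summable: "(\<lambda>x. x powr (-s)) summable_on beurling_integers Q"
    by (intro summable_on_powr_if_beurling_abscissa_less)
  have "2 * s - 1 + 2 * \<tau> \<le> D" "0 < \<tau>" "0 < s" "0 \<le> D"
    unfolding s_def \<tau>_def using \<open>C \<le> D\<close> assms by (auto simp: max_def min_def field_simps)
  then show ?thesis
    unfolding D_def[symmetric] using \<open>C \<le> D\<close> assms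
    by (intro AE_beurling_primes_insert_gap[OF assms(1,5,3) \<open>C \<le> D\<close> _ summable]) auto
qed

end
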